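(* Let $0<\alpha<n$ and $b$ be locally integrable on $\mathbb{Q}_p^n$. If for some $q(\cdot)\in\mathscr{B}(\mathbb{Q}_p^n)$ there is $C>0$ with $$\sup_{\gamma\in\mathbb{Z},x\in\mathbb{Q}_p^n}\frac{\big\|\big(b-|B_\gamma(x)|_h^{-\alpha/n}\mathcal{M}^p_{\alpha,B_\gamma(x)}(b)\big)\chi_{B_\gamma(x)}\big\|_{L^{q(\cdot)}(\mathbb{Q}_p^n)}}{\|\chi_{B_\gamma(x)}\|_{L^{q(\cdot)}(\mathbb{Q}_p^n)}}\le C,$$ then $b\in\mathrm{BMO}(\mathbb{Q}_p^n)$.
   Context: Fix a prime $p$; $\mathbb{Q}_p^n$ with $|x|_p=\max_j|x_j|_p$; balls $B_\gamma(x)=\{y:|y-x|_p\le p^\gamma\}$; Haar measure with $|B_\gamma(x)|_h=p^{n\gamma}$; $\chi_E$ indicator; $f_B=|B|_h^{-1}\int_Bf$. For a fixed ball $B_*$ and $x\in B_*$, $\mathcal{M}^p_{\alpha,B_*}(f)(x)=\sup\{|B_\gamma(x)|_h^{\alpha/n-1}\int_{B_\gamma(x)}|f|:\gamma\in\mathbb{Z},B_\gamma(x)\subset B_*\}$. $\mathrm{BMO}$: locally integrable $b$ with $\sup_{\gamma,x}|B_\gamma(x)|_h^{-1}\int_{B_\gamma(x)}|b-b_{B_\gamma(x)}|<\infty$. $\mathscr{P}(\mathbb{Q}_p^n)$: measurable $q:\mathbb{Q}_p^n\to(1,\infty)$ with $1<\operatorname{ess\,inf}q\le\operatorname{ess\,sup}q<\infty$.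 $L^{q(\cdot)}$ is normed by $\|f\|_{L^{q(\cdot)}}=\inf\{\eta>0:\int(|f(x)|/\eta)^{q(x)}dx\le1\}$. $\mathscr{B}(\mathbb{Q}_p^n)$ is the set of $q(\cdot)\in\mathscr{P}(\mathbb{Q}_p^n)$ such that the Hardy–Littlewood maximal operator $\mathcal{M}^p(f)(x)=\sup_{\gamma}|B_\gamma(x)|_h^{-1}\int_{B_\gamma(x)}|f|$ is bounded on $L^{q(\cdot)}(\mathbb{Q}_p^n)$. *)

theory Defs
  imports "HOL-Analysis.Analysis" "HOL-Computational_Algebra.Primes"
begin

section \<open>The field Q_p, constructed as Cauchy completion of Q w.r.t. the p-adic absolute value\<close>

definition padic_val_rat :: "nat \<Rightarrow> rat \<Rightarrow> int" where
  "padic_val_rat p r = (case quotient_of r of (a, b) \<Rightarrow>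
      int (multiplicity (int p) a) - int (multiplicity (int p) b))"

definition padic_abs_rat :: "nat \<Rightarrow> rat \<Rightarrow> real" where
  "padic_abs_rat p r = (if r = 0 then 0 else real p powr (- real_of_int (padic_val_rat p r)))"

definition padic_cauchy :: "nat \<Rightarrow> (nat \<Rightarrow> rat) \<Rightarrow> bool" where
  "padic_cauchy p X \<longleftrightarrow>
     (\<forall>e>0. \<exists>N. \<forall>m\<ge>N. \<forall>k\<ge>N. padic_abs_rat p (X m - X k) < e)"

definition padic_equiv :: "nat \<Rightarrow> (nat \<Rightarrow> rat) \<Rightarrow> (nat \<Rightarrow> rat) \<Rightarrow> bool" where
  "padic_equiv p X Y \<longleftrightarrow> (\<lambda>k. padic_abs_rat p (X k - Y k)) \<longlonglongrightarrow> 0"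

type_synonym qp = "(nat \<Rightarrow> rat) set"

definition padic_class :: "nat \<Rightarrow> (nat \<Rightarrow> rat) \<Rightarrow> qp" where
  "padic_class p X = {Y. padic_cauchy p Y \<and> padic_equiv p X Y}"

definition Qp :: "nat \<Rightarrow> qp set" where
  "Qp p = padic_class p ` {X. padic_cauchy p X}"

definition qp_rep :: "qp \<Rightarrow> (nat \<Rightarrow> rat)" where
  "qp_rep x = (SOME X. X \<in> x)"

definition qp_minus :: "nat \<Rightarrow> qp \<Rightarrow> qp \<Rightarrow> qp" where
  "qp_minus p x y = padic_class p (\<lambda>k. qp_rep x k - qp_rep y k)"

definition qp_abs :: "nat \<Rightarrow> qp \<Rightarrow> real" where
  "qp_abs p x = lim (\<lambda>k. padic_abs_rat p (qp_rep x k))"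

type_synonym qpn = "nat \<Rightarrow> qp"

definition Qpn :: "nat \<Rightarrow> nat \<Rightarrow> qpn set" where
  "Qpn p n = PiE {..<n} (\<lambda>_. Qp p)"

definition qpn_norm :: "nat \<Rightarrow> nat \<Rightarrow> qpn \<Rightarrow> real" where
  "qpn_norm p n x = Max ((\<lambda>j. qp_abs p (x j)) ` {..<n})"

definition qpn_dist :: "nat \<Rightarrow> nat \<Rightarrow> qpn \<Rightarrow> qpn \<Rightarrow> real" where
  "qpn_dist p n x y = qpn_norm p n (\<lambda>j. qp_minus p (x j) (y j))"

definition qball :: "nat \<Rightarrow> nat \<Rightarrow> int \<Rightarrow> qpn \<Rightarrow> qpn set" where
  "qball p n \<gamma> x = {y \<in> Qpn p n. qpn_dist p n y x \<le> real p powr real_of_int \<gamma>}"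

definition is_qp_haar :: "nat \<Rightarrow> nat \<Rightarrow> qpn measure \<Rightarrow> bool" where
  "is_qp_haar p n \<mu> \<longleftrightarrow>
     space \<mu> = Qpn p n \<and>
     sets \<mu> = sigma_sets (Qpn p n) {qball p n \<gamma> x | \<gamma> x. x \<in> Qpn p n} \<and>
     (\<forall>\<gamma>. \<forall>x\<in>Qpn p n. emeasure \<mu> (qball p n \<gamma> x) = ennreal (real p powr (real n * real_of_int \<gamma>)))"

definition ball_vol :: "nat \<Rightarrow> nat \<Rightarrow> int \<Rightarrow> real" where
  "ball_vol p n \<gamma> = real p powr (real n * real_of_int \<gamma>)"

definition qp_locally_integrable :: "nat \<Rightarrow> nat \<Rightarrow> qpn measure \<Rightarrow> (qpn \<Rightarrow> real) \<Rightarrow> bool" where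
  "qp_locally_integrable p n \<mu> f \<longleftrightarrow>
     (\<forall>\<gamma>. \<forall>x\<in>Qpn p n. set_integrable \<mu> (qball p n \<gamma> x) f)"

definition var_modular :: "'a measure \<Rightarrow> ('a \<Rightarrow> real) \<Rightarrow> ('a \<Rightarrow> ereal) \<Rightarrow> real \<Rightarrow> ennreal" where
  "var_modular M q f \<eta> =
     (\<integral>\<^sup>+ y. (if \<bar>f y\<bar> = \<infinity> then \<infinity> else ennreal ((real_of_ereal \<bar>f y\<bar> / \<eta>) powr q y)) \<partial>M)"

definition var_lp_norm :: "'a measure \<Rightarrow> ('a \<Rightarrow> real) \<Rightarrow> ('a \<Rightarrow> ereal) \<Rightarrow> ereal" where
  "var_lp_norm M q f = Inf {ereal \<eta> | \<eta>. \<eta> > 0 \<and> var_modular M q f \<eta> \<le> 1}"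

definition var_exp_P :: "'a measure \<Rightarrow> ('a \<Rightarrow> real) \<Rightarrow> bool" where
  "var_exp_P M q \<longleftrightarrow> q \<in> borel_measurable M \<and> (\<forall>y\<in>space M. 1 < q y) \<and>
     (\<exists>c>1. AE y in M. c \<le> q y) \<and> (\<exists>C. AE y in M. q y \<le> C)"

definition hl_maximal :: "nat \<Rightarrow> nat \<Rightarrow> qpn measure \<Rightarrow> (qpn \<Rightarrow> real) \<Rightarrow> qpn \<Rightarrow> ennreal" where
  "hl_maximal p n \<mu> f x = (SUP \<gamma>::int. ennreal (1 / ball_vol p n \<gamma>) *
       (\<integral>\<^sup>+ y\<in>qball p n \<gamma> x. ennreal \<bar>f y\<bar> \<partial>\<mu>))"

definition var_exp_B :: "nat \<Rightarrow> nat \<Rightarrow> qpn measure \<Rightarrow> (qpn \<Rightarrow> real) \<Rightarrow> bool" where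
  "var_exp_B p n \<mu> q \<longleftrightarrow> var_exp_P \<mu> q \<and>
     (\<exists>K::real. \<forall>f. f \<in> borel_measurable \<mu> \<and> var_lp_norm \<mu> q (\<lambda>y. ereal (f y)) < \<infinity> \<longrightarrow>
        var_lp_norm \<mu> q (\<lambda>y. enn2ereal (hl_maximal p n \<mu> f y))
          \<le> ereal K * var_lp_norm \<mu> q (\<lambda>y. ereal (f y)))"

definition frac_max_local :: "nat \<Rightarrow> nat \<Rightarrow> qpn measure \<Rightarrow> real \<Rightarrow> qpn set \<Rightarrow> (qpn \<Rightarrow> real) \<Rightarrow> qpn \<Rightarrow> ennreal" where
  "frac_max_local p n \<mu> \<alpha> B f x = (SUP \<gamma> \<in> {\<gamma>::int. qball p n \<gamma> x \<subseteq> B}.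
       ennreal (ball_vol p n \<gamma> powr (\<alpha> / real n - 1)) *
       (\<integral>\<^sup>+ y\<in>qball p n \<gamma> x. ennreal \<bar>f y\<bar> \<partial>\<mu>))"

definition qp_ball_avg :: "nat \<Rightarrow> nat \<Rightarrow> qpn measure \<Rightarrow> (qpn \<Rightarrow> real) \<Rightarrow> int \<Rightarrow> qpn \<Rightarrow> real" where
  "qp_ball_avg p n \<mu> f \<gamma> x = (1 / ball_vol p n \<gamma>) * (\<integral>y\<in>qball p n \<gamma> x. f y \<partial>\<mu>)"

definition qp_BMO :: "nat \<Rightarrow> nat \<Rightarrow> qpn measure \<Rightarrow> (qpn \<Rightarrow> real) \<Rightarrow> bool" where
  "qp_BMO p n \<mu> b \<longleftrightarrow> qp_locally_integrable p n \<mu> b \<and>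
     (\<exists>K. \<forall>\<gamma>. \<forall>x\<in>Qpn p n.
        qp_ball_avg p n \<mu> (\<lambda>y. \<bar>b y - qp_ball_avg p n \<mu> b \<gamma> x\<bar>) \<gamma> x \<le> K)"

end

theory Submission
  imports Defs
begin

text \<open>
  Balls in the ultrametric space \<open>Q\<^sub>p\<^sup>n\<close> are centred at each of their points. Hence on a
  ball \<open>B\<close> of volume \<open>V\<close> the fractional maximal function relative to \<open>B\<close> is at least
  \<open>V powr (\<alpha>/n - 1) * \<integral>\<^sub>B |b|\<close> everywhere on \<open>B\<close>, and the hypothesis bounds
  \<open>g = (c - b)\<^sub>+ \<chi>\<^sub>B\<close>, where \<open>c = V\<^sup>-\<^sup>1 \<integral>\<^sub>B |b|\<close>, by \<open>\<parallel>g\<parallel> \<le> C \<parallel>\<chi>\<^sub>B\<parallel>\<close>.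
  For the same reason the Hardy--Littlewood maximal function of \<open>g\<close> is at least the mean
  \<open>g\<^sub>B\<close> on \<open>B\<close>, so boundedness of the maximal operator gives
  \<open>g\<^sub>B \<parallel>\<chi>\<^sub>B\<parallel> \<le> K C \<parallel>\<chi>\<^sub>B\<parallel>\<close>. Since \<open>b\<^sub>B \<le> c\<close>, the mean oscillation of \<open>b\<close> on \<open>B\<close>
  is at most \<open>4 g\<^sub>B\<close>.
\<close>

section \<open>The p-adic ultrametric\<close>

lemma padic_val_rat_of_fraction:
  assumes "prime p" "c \<noteq> 0" "d \<noteq> 0" "r = of_int c / of_int d"
  shows "padic_val_rat p r = int (multiplicity (int p) c) - int (multiplicity (int p) d)"
proof -
  obtain a b where q: "quotient_of r = (a, b)" by (cases "quotient_of r") auto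
  have rab: "r = of_int a / of_int b" using quotient_of_div[OF q] .
  have b0: "b > 0" using quotient_of_denom_pos[OF q] .
  have a0: "a \<noteq> 0" using rab assms by auto
  have "(of_int (a * d) :: rat) = of_int (c * b)"
    using rab assms(3,4) b0 by (simp add: field_simps)
  hence "a * d = c * b" by (simp only: of_int_eq_iff)
  moreover have pe: "prime_elem (int p)" using assms(1) by (simp add: prime_nat_int_transfer)
  ultimately have "multiplicity (int p) a + multiplicity (int p) d
      = multiplicity (int p) c + multiplicity (int p) b"
    using prime_elem_multiplicity_mult_distrib[OF pe] a0 b0 assms(2,3) by (metis less_irrefl)
  thus ?thesis unfolding padic_val_rat_def q by simp
qed

lemma multiplicity_add_ge_min:
  assumes "prime p" "x + y \<noteq> (0::int)"
  shows "min (multiplicity (int p) x) (multiplicity (int p) y) \<le> multiplicity (int p) (x + y)"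
proof -
  let ?m = "min (multiplicity (int p) x) (multiplicity (int p) y)"
  have "\<not> is_unit (int p)" using assms(1) by (metis prime_nat_int_transfer not_prime_unit)
  moreover have "int p ^ ?m dvd x + y"
    using multiplicity_dvd'[of ?m "int p" x] multiplicity_dvd'[of ?m "int p" y] by simp
  ultimately show ?thesis using multiplicity_geI[OF assms(2)] by blast
qed

lemma multiplicity_uminus_int: "multiplicity (q::int) (- a) = multiplicity q a"
  using multiplicity_normalize_right[of q "-a"] multiplicity_normalize_right[of q a] by simp

lemma padic_val_rat_add_ge_min:
  assumes "prime p" "r \<noteq> 0" "s \<noteq> 0" "r + s \<noteq> 0"
  shows "min (padic_val_rat p r) (padic_val_rat p s) \<le> padic_val_rat p (r + s)"
proof -
  obtain a b where q: "quotient_of r = (a, b)" by (cases "quotient_of r") auto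
  obtain a' b' where q': "quotient_of s = (a', b')" by (cases "quotient_of s") auto
  have r: "r = of_int a / of_int b" and b0: "b > 0"
    using quotient_of_div[OF q] quotient_of_denom_pos[OF q] .
  have s: "s = of_int a' / of_int b'" and b0': "b' > 0"
    using quotient_of_div[OF q'] quotient_of_denom_pos[OF q'] .
  have a0: "a \<noteq> 0" and a0': "a' \<noteq> 0" using r s assms by auto
  have rs: "r + s = of_int (a*b' + a'*b) / of_int (b*b')"
    using r s b0 b0' by (simp add: field_simps)
  have c0: "a*b' + a'*b \<noteq> 0" using rs assms(4) by (metis div_0 of_int_0)
  let ?v = "multiplicity (int p)"
  have pe: "prime_elem (int p)" using assms(1) by (simp add: prime_nat_int_transfer)
  have "padic_val_rat p r = int (?v a) - int (?v b)"
    by (rule padic_val_rat_of_fraction[OF assms(1) a0]) (use b0 r in auto)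
  moreover have "padic_val_rat p s = int (?v a') - int (?v b')"
    by (rule padic_val_rat_of_fraction[OF assms(1) a0']) (use b0' s in auto)
  moreover have "padic_val_rat p (r + s) = int (?v (a*b' + a'*b)) - int (?v (b*b'))"
    by (rule padic_val_rat_of_fraction[OF assms(1) c0]) (use b0 b0' rs in auto)
  moreover have "?v (a*b') = ?v a + ?v b'" "?v (a'*b) = ?v a' + ?v b" "?v (b*b') = ?v b + ?v b'"
    using prime_elem_multiplicity_mult_distrib[OF pe] a0 a0' b0 b0' by simp_all
  ultimately show ?thesis using multiplicity_add_ge_min[OF assms(1) c0] by linarith
qed

lemma padic_val_rat_uminus:
  assumes "prime p"
  shows "padic_val_rat p (- r) = padic_val_rat p r"
proof (cases "r = 0")
  case False
  obtain a b where q: "quotient_of r = (a, b)" by (cases "quotient_of r") auto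
  have r: "r = of_int a / of_int b" and b0: "b > 0"
    using quotient_of_div[OF q] quotient_of_denom_pos[OF q] .
  have a0: "a \<noteq> 0" using r False by auto
  have "padic_val_rat p (- r) = int (multiplicity (int p) (-a)) - int (multiplicity (int p) b)"
    by (rule padic_val_rat_of_fraction[OF assms]) (use a0 b0 r in auto)
  thus ?thesis unfolding padic_val_rat_def q by (simp add: multiplicity_uminus_int)
qed simp

lemma padic_abs_rat_nonneg: "0 \<le> padic_abs_rat p r"
  unfolding padic_abs_rat_def by simp

lemma padic_abs_rat_0 [simp]: "padic_abs_rat p 0 = 0"
  unfolding padic_abs_rat_def by simp

lemma padic_abs_rat_uminus: "prime p \<Longrightarrow> padic_abs_rat p (- r) = padic_abs_rat p r"
  unfolding padic_abs_rat_def by (simp add: padic_val_rat_uminus)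

lemma padic_abs_rat_ultrametric:
  assumes "prime p"
  shows "padic_abs_rat p (r + s) \<le> max (padic_abs_rat p r) (padic_abs_rat p s)"
proof (cases "r = 0 \<or> s = 0 \<or> r + s = 0")
  case True
  thus ?thesis using padic_abs_rat_nonneg[of p r] padic_abs_rat_nonneg[of p s] by auto
next
  case False
  have "min (padic_val_rat p r) (padic_val_rat p s) \<le> padic_val_rat p (r + s)"
    using padic_val_rat_add_ge_min[OF assms] False by auto
  hence "real p powr (- real_of_int (padic_val_rat p (r + s)))
      \<le> max (real p powr (- real_of_int (padic_val_rat p r)))
            (real p powr (- real_of_int (padic_val_rat p s)))"
    using prime_gt_1_nat[OF assms] by (auto simp: min_def max_def split: if_splits)
  thus ?thesis using False unfolding padic_abs_rat_def by auto
qed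

lemma padic_abs_rat_triangle: "prime p \<Longrightarrow> padic_abs_rat p (r + s) \<le> padic_abs_rat p r + padic_abs_rat p s"
  using padic_abs_rat_ultrametric[of p r s] padic_abs_rat_nonneg[of p] by (smt (verit))

lemma padic_abs_rat_diff_le:
  assumes "prime p"
  shows "\<bar>padic_abs_rat p r - padic_abs_rat p s\<bar> \<le> padic_abs_rat p (r - s)"
  using padic_abs_rat_triangle[OF assms, of "r - s" s] padic_abs_rat_triangle[OF assms, of "s - r" r]
    padic_abs_rat_uminus[OF assms, of "r - s"] by simp

lemma padic_cauchy_diff:
  assumes "prime p" "padic_cauchy p X" "padic_cauchy p Y"
  shows "padic_cauchy p (\<lambda>k. X k - Y k)"
  unfolding padic_cauchy_def
proof (intro allI impI)
  fix e :: real assume "e > 0"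
  then obtain N1 N2 where N1: "\<forall>m\<ge>N1. \<forall>k\<ge>N1. padic_abs_rat p (X m - X k) < e/2"
    and N2: "\<forall>m\<ge>N2. \<forall>k\<ge>N2. padic_abs_rat p (Y m - Y k) < e/2"
    using assms(2,3) unfolding padic_cauchy_def by (meson half_gt_zero)
  show "\<exists>N. \<forall>m\<ge>N. \<forall>k\<ge>N. padic_abs_rat p (X m - Y m - (X k - Y k)) < e"
  proof (intro exI[of _ "max N1 N2"] allI impI)
    fix m k assume "max N1 N2 \<le> m" "max N1 N2 \<le> k"
    hence "padic_abs_rat p (X m - X k) < e/2" "padic_abs_rat p (-(Y m - Y k)) < e/2"
      using N1 N2 padic_abs_rat_uminus[OF assms(1)] by auto
    moreover have "X m - Y m - (X k - Y k) = (X m - X k) + (-(Y m - Y k))" by simp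
    ultimately show "padic_abs_rat p (X m - Y m - (X k - Y k)) < e"
      using padic_abs_rat_triangle[OF assms(1), of "X m - X k" "-(Y m - Y k)"]
      by (metis add_strict_mono field_sum_of_halves order_le_less_trans)
  qed
qed

lemma convergent_padic_abs_rat:
  assumes "prime p" "padic_cauchy p X"
  shows "convergent (\<lambda>k. padic_abs_rat p (X k))"
proof -
  have "Cauchy (\<lambda>k. padic_abs_rat p (X k))"
  proof (rule metric_CauchyI)
    fix e :: real assume "e > 0"
    then obtain N where "\<forall>m\<ge>N. \<forall>k\<ge>N. padic_abs_rat p (X m - X k) < e"
      using assms(2) unfolding padic_cauchy_def by blast
    thus "\<exists>N. \<forall>m\<ge>N. \<forall>k\<ge>N. dist (padic_abs_rat p (X m)) (padic_abs_rat p (X k)) < e"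
      using padic_abs_rat_diff_le[OF assms(1)] unfolding dist_real_def by (meson le_less_trans)
  qed
  thus ?thesis using Cauchy_convergent_iff by blast
qed

lemma lim_padic_abs_rat_eq:
  assumes "prime p" "padic_cauchy p X" "padic_cauchy p Y" "padic_equiv p X Y"
  shows "lim (\<lambda>k. padic_abs_rat p (X k)) = lim (\<lambda>k. padic_abs_rat p (Y k))"
proof -
  let ?x = "lim (\<lambda>k. padic_abs_rat p (X k))"
  have X: "(\<lambda>k. padic_abs_rat p (X k)) \<longlonglongrightarrow> ?x"
    using convergent_padic_abs_rat[OF assms(1,2)] convergent_LIMSEQ_iff by blast
  have "(\<lambda>k. padic_abs_rat p (X k) - padic_abs_rat p (Y k)) \<longlonglongrightarrow> 0"
    using assms(4) unfolding padic_equiv_def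
    by (rule Lim_null_comparison[rotated]) (simp add: padic_abs_rat_diff_le[OF assms(1)])
  from tendsto_diff[OF X this] have "(\<lambda>k. padic_abs_rat p (Y k)) \<longlonglongrightarrow> ?x" by simp
  thus ?thesis by (simp add: limI)
qed

lemma qp_rep_in_padic_class: "padic_cauchy p X \<Longrightarrow> qp_rep (padic_class p X) \<in> padic_class p X"
  unfolding qp_rep_def padic_class_def padic_equiv_def by (rule someI[of _ X]) simp

lemma padic_cauchy_qp_rep: "a \<in> Qp p \<Longrightarrow> padic_cauchy p (qp_rep a)"
  unfolding Qp_def using qp_rep_in_padic_class unfolding padic_class_def by blast

lemma qp_abs_padic_class:
  assumes "prime p" "padic_cauchy p X"
  shows "qp_abs p (padic_class p X) = lim (\<lambda>k. padic_abs_rat p (X k))"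
  using qp_rep_in_padic_class[OF assms(2)] lim_padic_abs_rat_eq[OF assms]
  unfolding qp_abs_def padic_class_def by auto

definition qp_dist :: "nat \<Rightarrow> qp \<Rightarrow> qp \<Rightarrow> real" where
  "qp_dist p a b = qp_abs p (qp_minus p a b)"

lemma qp_dist_LIMSEQ:
  assumes "prime p" "a \<in> Qp p" "b \<in> Qp p"
  shows "(\<lambda>k. padic_abs_rat p (qp_rep a k - qp_rep b k)) \<longlonglongrightarrow> qp_dist p a b"
proof -
  have X: "padic_cauchy p (\<lambda>k. qp_rep a k - qp_rep b k)"
    using padic_cauchy_diff[OF assms(1)] padic_cauchy_qp_rep assms(2,3) by blast
  show ?thesis
    unfolding qp_dist_def qp_minus_def qp_abs_padic_class[OF assms(1) X]
    using convergent_padic_abs_rat[OF assms(1) X] by (simp add: convergent_LIMSEQ_iff)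
qed

lemma qp_dist_commute:
  assumes "prime p" "a \<in> Qp p" "b \<in> Qp p"
  shows "qp_dist p a b = qp_dist p b a"
proof -
  have "(\<lambda>k. padic_abs_rat p (qp_rep a k - qp_rep b k)) = (\<lambda>k. padic_abs_rat p (qp_rep b k - qp_rep a k))"
    using padic_abs_rat_uminus[OF assms(1)] by (metis minus_diff_eq)
  thus ?thesis using qp_dist_LIMSEQ assms LIMSEQ_unique by metis
qed

lemma qp_dist_ultrametric:
  assumes "prime p" "a \<in> Qp p" "b \<in> Qp p" "c \<in> Qp p"
  shows "qp_dist p a c \<le> max (qp_dist p a b) (qp_dist p b c)"
proof (rule LIMSEQ_le[OF qp_dist_LIMSEQ[OF assms(1,2,4)]
      tendsto_max[OF qp_dist_LIMSEQ[OF assms(1,2,3)] qp_dist_LIMSEQ[OF assms(1,3,4)]]])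
  show "\<exists>N. \<forall>k\<ge>N. padic_abs_rat p (qp_rep a k - qp_rep c k)
     \<le> max (padic_abs_rat p (qp_rep a k - qp_rep b k)) (padic_abs_rat p (qp_rep b k - qp_rep c k))"
    using padic_abs_rat_ultrametric[OF assms(1)] by (metis diff_add_cancel add_diff_eq)
qed

lemma qpn_dist_le_iff:
  assumes "n > 0"
  shows "qpn_dist p n x y \<le> t \<longleftrightarrow> (\<forall>j<n. qp_dist p (x j) (y j) \<le> t)"
  unfolding qpn_dist_def qpn_norm_def qp_dist_def using assms by (subst Max_le_iff) auto

lemma qball_eq_of_mem:
  assumes "prime p" "n > 0" "x \<in> Qpn p n" "y \<in> qball p n \<gamma> x"
  shows "qball p n \<gamma> y = qball p n \<gamma> x"
proof -
  let ?r = "real p powr real_of_int \<gamma>"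
  have y: "y \<in> Qpn p n" and yx: "qpn_dist p n y x \<le> ?r" using assms(4) unfolding qball_def by auto
  have coord: "u \<in> Qpn p n \<Longrightarrow> j < n \<Longrightarrow> u j \<in> Qp p" for u j
    unfolding Qpn_def by auto
  have trans: "qpn_dist p n z w \<le> ?r"
    if "z \<in> Qpn p n" "u \<in> Qpn p n" "w \<in> Qpn p n" "qpn_dist p n z u \<le> ?r" "qpn_dist p n u w \<le> ?r"
    for z u w
    using that qp_dist_ultrametric[OF assms(1) coord coord coord]
    unfolding qpn_dist_le_iff[OF assms(2)] by (meson max.bounded_iff order_trans)
  have xy: "qpn_dist p n x y \<le> ?r"
    using yx qp_dist_commute[OF assms(1) coord coord] assms(3) y
    unfolding qpn_dist_le_iff[OF assms(2)] by metis
  show ?thesis unfolding qball_def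
    using trans[OF _ y assms(3) _ yx] trans[OF _ assms(3) y _ xy] by blast
qed

section \<open>Variable exponent norms\<close>

lemma var_lp_norm_nonneg: "0 \<le> var_lp_norm M q f"
  unfolding var_lp_norm_def by (rule Inf_greatest) auto

lemma var_modular_mono:
  assumes "\<forall>y\<in>space M. \<bar>f y\<bar> \<le> \<bar>g y\<bar>" "\<forall>y\<in>space M. 0 < q y" "0 < \<eta>"
  shows "var_modular M q f \<eta> \<le> var_modular M q g \<eta>"
  unfolding var_modular_def
proof (rule nn_integral_mono)
  fix y assume y: "y \<in> space M"
  show "(if \<bar>f y\<bar> = \<infinity> then \<infinity> else ennreal ((real_of_ereal \<bar>f y\<bar> / \<eta>) powr q y))
     \<le> (if \<bar>g y\<bar> = \<infinity> then \<infinity> else ennreal ((real_of_ereal \<bar>g y\<bar> / \<eta>) powr q y))"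
  proof (cases "\<bar>g y\<bar> = \<infinity>")
    case False
    have fg: "\<bar>f y\<bar> \<le> \<bar>g y\<bar>" using assms(1) y by auto
    hence fin: "\<bar>f y\<bar> \<noteq> \<infinity>" using False by auto
    have "real_of_ereal \<bar>f y\<bar> \<le> real_of_ereal \<bar>g y\<bar>"
      using fg fin False by (cases "\<bar>f y\<bar>"; cases "\<bar>g y\<bar>") auto
    hence "(real_of_ereal \<bar>f y\<bar> / \<eta>) powr q y \<le> (real_of_ereal \<bar>g y\<bar> / \<eta>) powr q y"
      using assms(2,3) y by (intro powr_mono2 divide_right_mono) (auto simp: real_of_ereal_pos)
    thus ?thesis using False fin by (simp add: ennreal_leI)
  qed simp
qed

lemma var_lp_norm_mono:
  assumes "\<forall>y\<in>space M. \<bar>f y\<bar> \<le> \<bar>g y\<bar>" "\<forall>y\<in>space M. 0 < q y"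
  shows "var_lp_norm M q f \<le> var_lp_norm M q g"
  unfolding var_lp_norm_def
  by (rule Inf_superset_mono) (auto intro: order_trans[OF var_modular_mono[OF assms]])

lemma var_modular_scale:
  assumes "0 < a" "0 < \<eta>"
  shows "var_modular M q (\<lambda>y. ereal (a * h y)) \<eta> = var_modular M q (\<lambda>y. ereal (h y)) (\<eta> / a)"
  unfolding var_modular_def using assms by (simp add: abs_mult mult.commute)

lemma var_lp_norm_scale_ge:
  assumes "0 < a"
  shows "ereal a * var_lp_norm M q (\<lambda>y. ereal (h y)) \<le> var_lp_norm M q (\<lambda>y. ereal (a * h y))"
  unfolding var_lp_norm_def
proof (rule Inf_greatest)
  let ?S = "{ereal \<eta> |\<eta>. 0 < \<eta> \<and> var_modular M q (\<lambda>y. ereal (h y)) \<eta> \<le> 1}"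
  fix b assume "b \<in> {ereal \<eta> |\<eta>. 0 < \<eta> \<and> var_modular M q (\<lambda>y. ereal (a * h y)) \<eta> \<le> 1}"
  then obtain \<eta> where \<eta>: "b = ereal \<eta>" "0 < \<eta>" "var_modular M q (\<lambda>y. ereal (a * h y)) \<eta> \<le> 1"
    by auto
  hence "ereal (\<eta> / a) \<in> ?S" using var_modular_scale[OF assms \<eta>(2), of M q h] assms by auto
  hence "ereal a * Inf ?S \<le> ereal a * ereal (\<eta> / a)"
    using assms by (intro ereal_mult_left_mono Inf_lower) auto
  thus "ereal a * Inf ?S \<le> b" using assms \<eta> by simp
qed

lemma var_modular_indicator:
  "var_modular M q (\<lambda>y. ereal (indicator B y)) \<eta> = (\<integral>\<^sup>+ y. ennreal ((1 / \<eta>) powr q y) * indicator B y \<partial>M)"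
  unfolding var_modular_def by (rule nn_integral_cong) (auto simp: indicator_def)

lemma var_lp_norm_indicator_ge:
  assumes "B \<in> sets M" "emeasure M B = ennreal V" "0 < V" "\<forall>y\<in>space M. 1 < q y"
  shows "ereal (min 1 V) \<le> var_lp_norm M q (\<lambda>y. ereal (indicator B y))"
  unfolding var_lp_norm_def
proof (rule Inf_greatest)
  fix b assume "b \<in> {ereal \<eta> |\<eta>. 0 < \<eta> \<and> var_modular M q (\<lambda>y. ereal (indicator B y)) \<eta> \<le> 1}"
  then obtain \<eta> where \<eta>: "b = ereal \<eta>" "0 < \<eta>" "var_modular M q (\<lambda>y. ereal (indicator B y)) \<eta> \<le> 1"
    by auto
  have "min 1 V \<le> \<eta>"
  proof (rule ccontr)
    assume "\<not> min 1 V \<le> \<eta>"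
    hence small: "\<eta> < 1" "\<eta> < V" by auto
    have "ennreal (1 / \<eta>) * ennreal V = (\<integral>\<^sup>+ y. ennreal (1 / \<eta>) * indicator B y \<partial>M)"
      using nn_integral_cmult_indicator[OF assms(1)] assms(2) by simp
    also have "\<dots> \<le> (\<integral>\<^sup>+ y. ennreal ((1 / \<eta>) powr q y) * indicator B y \<partial>M)"
    proof (rule nn_integral_mono)
      fix y assume "y \<in> space M"
      hence "(1 / \<eta>) powr 1 \<le> (1 / \<eta>) powr q y"
        using assms(4) small \<eta>(2) by (intro powr_mono) auto
      thus "ennreal (1 / \<eta>) * indicator B y \<le> ennreal ((1 / \<eta>) powr q y) * indicator B y"
        using \<eta>(2) by (auto simp: indicator_def intro: ennreal_leI)
    qed
    also have "\<dots> \<le> 1" using \<eta>(3) by (simp add: var_modular_indicator)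
    finally have "V / \<eta> \<le> 1"
      using \<eta>(2) assms(3) by (simp add: ennreal_mult[symmetric] ennreal_le_1)
    thus False using small \<eta>(2) by (simp add: field_simps)
  qed
  thus "ereal (min 1 V) \<le> b" using \<eta> by (simp del: ereal_min add: ereal_min[symmetric])
qed

lemma var_lp_norm_indicator_le:
  assumes "B \<in> sets M" "emeasure M B = ennreal V" "0 < V" "\<forall>y\<in>space M. 1 < q y"
  shows "var_lp_norm M q (\<lambda>y. ereal (indicator B y)) \<le> ereal (max 1 V)"
  unfolding var_lp_norm_def
proof (rule Inf_lower, intro CollectI exI conjI)
  let ?\<eta> = "max 1 V"
  have "(\<integral>\<^sup>+ y. ennreal ((1 / ?\<eta>) powr q y) * indicator B y \<partial>M) \<le> (\<integral>\<^sup>+ y. ennreal (1 / ?\<eta>) * indicator B y \<partial>M)"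
  proof (rule nn_integral_mono)
    fix y assume "y \<in> space M"
    hence "(1 / ?\<eta>) powr q y \<le> (1 / ?\<eta>) powr 1"
      using assms(4) by (intro powr_mono') auto
    thus "ennreal ((1 / ?\<eta>) powr q y) * indicator B y \<le> ennreal (1 / ?\<eta>) * indicator B y"
      by (auto simp: indicator_def intro: ennreal_leI)
  qed
  also have "\<dots> = ennreal (V / ?\<eta>)"
    using nn_integral_cmult_indicator[OF assms(1)] assms(2,3) by (simp add: ennreal_mult[symmetric])
  also have "\<dots> \<le> 1" using assms(3) by (simp add: ennreal_le_1 field_simps)
  finally show "var_modular M q (\<lambda>y. ereal (indicator B y)) ?\<eta> \<le> 1"
    by (simp add: var_modular_indicator)
qed auto

section \<open>Mean oscillation and the negative part\<close>

lemma integral_abs_le_twice_negative_part: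
  fixes h :: "'a \<Rightarrow> real"
  assumes "integrable M h" "integral\<^sup>L M h \<le> 0"
  shows "(LINT y|M. \<bar>h y\<bar>) \<le> 2 * (LINT y|M. max 0 (- h y))"
proof -
  have "(LINT y|M. \<bar>h y\<bar>) = (LINT y|M. h y + 2 * max 0 (- h y))"
    by (rule Bochner_Integration.integral_cong) auto
  also have "\<dots> = integral\<^sup>L M h + 2 * (LINT y|M. max 0 (- h y))"
    using assms(1) by (simp add: integrable_max)
  finally show ?thesis using assms(2) by linarith
qed

text \<open>
  \<open>c = V\<^sup>-\<^sup>1 \<integral>\<^sub>B |b|\<close> dominates \<open>b\<^sub>B\<close>, so \<open>h = (b - c) \<chi>\<^sub>B\<close> has non-positive integral and
  \<open>\<integral>|h| \<le> 2 \<integral>h\<^sub>-\<close>; the other half of the factor 4 comes from \<open>|c - b\<^sub>B| V = |\<integral>h|\<close>.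
\<close>
lemma mean_oscillation_le_negative_part:
  fixes M :: "'a measure" and b :: "'a \<Rightarrow> real"
  assumes B: "B \<in> sets M" "emeasure M B = ennreal V" and V: "0 < V"
    and b: "integrable M (\<lambda>y. indicator B y * b y)"
  defines "c \<equiv> (LINT y|M. \<bar>indicator B y * b y\<bar>) / V"
  shows "integrable M (\<lambda>y. max 0 (c * indicator B y - indicator B y * b y))"
    and "(LINT y|M. indicator B y * \<bar>b y - (1/V) * (LINT y|M. indicator B y * b y)\<bar>)
      \<le> 4 * (LINT y|M. max 0 (c * indicator B y - indicator B y * b y))"
proof -
  let ?A = "LINT y|M. indicator B y * b y"
  let ?m = "(1/V) * ?A"
  have iB: "integrable M (indicator B :: 'a \<Rightarrow> real)"
    using integrable_real_indicator[OF B(1)] B(2) by simp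
  have intB: "(LINT y|M. indicator B y) = V"
    using B V by (simp add: measure_def sets.Int_space_eq2)
  define h where "h = (\<lambda>y. indicator B y * b y - c * indicator B y)"
  have h: "integrable M h" unfolding h_def using b iB by simp
  have neg_h: "(\<lambda>y. max 0 (- h y)) = (\<lambda>y. max 0 (c * indicator B y - indicator B y * b y))"
    unfolding h_def by auto
  show "integrable M (\<lambda>y. max 0 (c * indicator B y - indicator B y * b y))"
    unfolding neg_h[symmetric] using h by (simp add: integrable_max)
  have int_h: "integral\<^sup>L M h = ?A - c * V"
    unfolding h_def using b iB intB by simp
  moreover have "?A \<le> c * V" unfolding c_def using b V by (simp add: integral_mono)
  ultimately have abs_h: "(LINT y|M. \<bar>h y\<bar>) \<le> 2 * (LINT y|M. max 0 (c * indicator B y - indicator B y * b y))"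
    using integral_abs_le_twice_negative_part[OF h] neg_h by simp
  have "\<bar>c - ?m\<bar> * V = \<bar>integral\<^sup>L M h\<bar>"
    using V int_h by (simp add: abs_mult[symmetric] field_simps abs_minus_commute)
  hence c_m: "\<bar>c - ?m\<bar> * V \<le> (LINT y|M. \<bar>h y\<bar>)" using integral_abs_bound by metis
  have "integrable M (\<lambda>y. \<bar>indicator B y * b y - ?m * indicator B y\<bar>)" using b iB by simp
  moreover have "(\<lambda>y. \<bar>indicator B y * b y - ?m * indicator B y\<bar>) = (\<lambda>y. indicator B y * \<bar>b y - ?m\<bar>)"
    by (auto simp: indicator_def)
  ultimately have osc: "integrable M (\<lambda>y. indicator B y * \<bar>b y - ?m\<bar>)" by simp
  have "(LINT y|M. indicator B y * \<bar>b y - ?m\<bar>) \<le> (LINT y|M. \<bar>h y\<bar> + \<bar>c - ?m\<bar> * indicator B y)"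
  proof (rule integral_mono[OF osc])
    show "integrable M (\<lambda>y. \<bar>h y\<bar> + \<bar>c - ?m\<bar> * indicator B y)" using h iB by simp
  qed (auto simp: h_def indicator_def)
  also have "\<dots> = (LINT y|M. \<bar>h y\<bar>) + \<bar>c - ?m\<bar> * V" using h iB intB by simp
  finally show "(LINT y|M. indicator B y * \<bar>b y - ?m\<bar>)
      \<le> 4 * (LINT y|M. max 0 (c * indicator B y - indicator B y * b y))"
    using c_m abs_h by linarith
qed

section \<open>Maximal functions on a ball\<close>

lemma abs_ereal_pos_part_le_abs_diff:
  assumes "ereal c \<le> X"
  shows "\<bar>ereal (max 0 (c - r))\<bar> \<le> \<bar>ereal r - X\<bar>"
  using assms by (cases X) (auto simp del: ereal_max)

text \<open>
  \<open>\<parallel>\<chi>\<^sub>B\<parallel>\<close> lies between \<open>min 1 V\<close> and \<open>max 1 V\<close>, so it is a positive real and cancels from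
  \<open>a \<parallel>\<chi>\<^sub>B\<parallel> \<le> K \<parallel>g\<parallel> \<le> K C \<parallel>\<chi>\<^sub>B\<parallel>\<close>.
\<close>
lemma le_of_maximal_inequality_on_indicator:
  fixes g :: "'a \<Rightarrow> real" and F m :: "'a \<Rightarrow> ereal"
  assumes B: "B \<in> sets M" "emeasure M B = ennreal V" "0 < V"
    and q: "\<forall>y\<in>space M. 1 < q y"
    and g_F: "\<forall>y\<in>space M. \<bar>ereal (g y)\<bar> \<le> \<bar>F y\<bar>"
    and F: "var_lp_norm M q F / var_lp_norm M q (\<lambda>y. ereal (indicator B y)) \<le> ereal C"
    and m: "\<forall>y\<in>space M. \<bar>ereal (a * indicator B y)\<bar> \<le> \<bar>m y\<bar>"
    and maximal: "var_lp_norm M q (\<lambda>y. ereal (g y)) < \<infinity> \<Longrightarrow>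
      var_lp_norm M q m \<le> ereal K * var_lp_norm M q (\<lambda>y. ereal (g y))"
  shows "a \<le> max K 0 * C"
proof -
  have q0: "\<forall>y\<in>space M. 0 < q y" using q by force
  obtain N where N: "var_lp_norm M q (\<lambda>y. ereal (indicator B y)) = ereal N" "0 < N"
    using var_lp_norm_indicator_ge[OF B q] var_lp_norm_indicator_le[OF B q] B(3)
    by (cases "var_lp_norm M q (\<lambda>y. ereal (indicator B y))") (auto simp del: ereal_min ereal_max)
  have "var_lp_norm M q (\<lambda>y. ereal (g y)) \<le> ereal (N * C)"
    using var_lp_norm_mono[OF g_F q0] F N by (simp add: ereal_divide_le_pos mult.commute)
  then obtain G where G: "var_lp_norm M q (\<lambda>y. ereal (g y)) = ereal G" "0 \<le> G" "G \<le> N * C"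
    using var_lp_norm_nonneg[of M q "\<lambda>y. ereal (g y)"]
    by (cases "var_lp_norm M q (\<lambda>y. ereal (g y))") auto
  have "0 \<le> N * C" using G by linarith
  hence "0 \<le> max K 0 * C" using N(2) by (simp add: zero_le_mult_iff)
  show ?thesis
  proof (cases "0 < a")
    case True
    have "ereal (a * N) = ereal a * var_lp_norm M q (\<lambda>y. ereal (indicator B y))"
      using N by simp
    also have "\<dots> \<le> var_lp_norm M q (\<lambda>y. ereal (a * indicator B y))"
      by (rule var_lp_norm_scale_ge[OF True])
    also have "\<dots> \<le> var_lp_norm M q m" by (rule var_lp_norm_mono[OF m q0])
    also have "\<dots> \<le> ereal (K * G)" using maximal G(1) by simp
    finally have "a * N \<le> K * G" by simp
    also have "\<dots> \<le> max K 0 * (N * C)" using G by (intro mult_mono) auto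
    finally show ?thesis using N(2) by (simp add: mult.commute mult.left_commute)
  qed (use \<open>0 \<le> max K 0 * C\<close> in linarith)
qed

lemma set_nn_integral_abs_eq_integral:
  fixes f :: "'a \<Rightarrow> real"
  assumes "integrable M (\<lambda>y. indicator B y * f y)"
  shows "(\<integral>\<^sup>+ y\<in>B. ennreal \<bar>f y\<bar> \<partial>M) = ennreal (LINT y|M. \<bar>indicator B y * f y\<bar>)"
proof -
  have "(\<integral>\<^sup>+ y\<in>B. ennreal \<bar>f y\<bar> \<partial>M) = (\<integral>\<^sup>+ y. ennreal \<bar>indicator B y * f y\<bar> \<partial>M)"
    by (rule nn_integral_cong) (auto simp: indicator_def)
  also have "\<dots> = ennreal (LINT y|M. \<bar>indicator B y * f y\<bar>)"
    using assms by (intro nn_integral_eq_integral) auto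
  finally show ?thesis .
qed

lemma ball_vol_pos: "0 < p \<Longrightarrow> 0 < ball_vol p n \<gamma>"
  unfolding ball_vol_def by simp

lemma hl_maximal_ge_ball_average:
  assumes "prime p" "0 < n" "x \<in> Qpn p n" "y \<in> qball p n \<gamma> x"
    and "integrable \<mu> (\<lambda>z. indicator (qball p n \<gamma> x) z * f z)"
  shows "ereal ((LINT z|\<mu>. \<bar>indicator (qball p n \<gamma> x) z * f z\<bar>) / ball_vol p n \<gamma>)
    \<le> enn2ereal (hl_maximal p n \<mu> f y)"
proof -
  let ?V = "ball_vol p n \<gamma>" and ?I = "LINT z|\<mu>. \<bar>indicator (qball p n \<gamma> x) z * f z\<bar>"
  have "ennreal (1 / ?V) * ennreal ?I \<le> hl_maximal p n \<mu> f y"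
    unfolding hl_maximal_def using qball_eq_of_mem[OF assms(1-4)]
    by (intro SUP_upper2[of \<gamma>]) (simp_all add: set_nn_integral_abs_eq_integral[OF assms(5)])
  moreover have "ennreal (1 / ?V) * ennreal ?I = ennreal (?I / ?V)"
    using ball_vol_pos[of p n \<gamma>] prime_gt_0_nat[OF assms(1)] by (subst ennreal_mult'[symmetric]) auto
  moreover have "0 \<le> ?I / ?V"
    using ball_vol_pos[of p n \<gamma>] prime_gt_0_nat[OF assms(1)] by simp
  ultimately show ?thesis by (simp add: less_eq_ennreal.rep_eq)
qed

lemma frac_max_local_ge_ball_average:
  assumes "prime p" "0 < n" "x \<in> Qpn p n" "y \<in> qball p n \<gamma> x"
    and "integrable \<mu> (\<lambda>z. indicator (qball p n \<gamma> x) z * f z)"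
  shows "ereal ((LINT z|\<mu>. \<bar>indicator (qball p n \<gamma> x) z * f z\<bar>) / ball_vol p n \<gamma>)
    \<le> ereal (ball_vol p n \<gamma> powr (- \<alpha> / real n)) * enn2ereal (frac_max_local p n \<mu> \<alpha> (qball p n \<gamma> x) f y)"
proof -
  let ?V = "ball_vol p n \<gamma>" and ?I = "LINT z|\<mu>. \<bar>indicator (qball p n \<gamma> x) z * f z\<bar>"
  have V: "0 < ?V" using ball_vol_pos prime_gt_0_nat[OF assms(1)] by blast
  have "ennreal (?V powr (\<alpha> / real n - 1)) * ennreal ?I \<le> frac_max_local p n \<mu> \<alpha> (qball p n \<gamma> x) f y"
    unfolding frac_max_local_def using qball_eq_of_mem[OF assms(1-4)]
    by (intro SUP_upper2[of \<gamma>]) (simp_all add: set_nn_integral_abs_eq_integral[OF assms(5)])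
  hence "ennreal (?V powr (\<alpha> / real n - 1) * ?I) \<le> frac_max_local p n \<mu> \<alpha> (qball p n \<gamma> x) f y"
    by (simp add: ennreal_mult)
  moreover have "0 \<le> ?V powr (\<alpha> / real n - 1) * ?I" by simp
  ultimately have "ereal (?V powr (\<alpha> / real n - 1) * ?I) \<le> enn2ereal (frac_max_local p n \<mu> \<alpha> (qball p n \<gamma> x) f y)"
    by (simp add: less_eq_ennreal.rep_eq)
  hence "ereal (?V powr (- \<alpha> / real n)) * ereal (?V powr (\<alpha> / real n - 1) * ?I)
      \<le> ereal (?V powr (- \<alpha> / real n)) * enn2ereal (frac_max_local p n \<mu> \<alpha> (qball p n \<gamma> x) f y)"
    by (intro ereal_mult_left_mono) auto
  moreover have "?V powr (- \<alpha> / real n) * ?V powr (\<alpha> / real n - 1) = ?V powr (- 1)"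
    using V by (simp add: powr_add[symmetric])
  hence "?V powr (- \<alpha> / real n) * (?V powr (\<alpha> / real n - 1) * ?I) = ?I / ?V"
    using V by (simp add: powr_minus_divide mult.assoc[symmetric])
  ultimately show ?thesis by simp
qed

lemma qball_mean_oscillation_le:
  fixes \<mu> :: "qpn measure" and b q :: "qpn \<Rightarrow> real"
  assumes p: "prime p" and n: "0 < n" and haar: "is_qp_haar p n \<mu>"
    and b: "qp_locally_integrable p n \<mu> b"
    and q: "\<forall>y\<in>Qpn p n. 1 < q y"
    and maximal: "\<forall>f. f \<in> borel_measurable \<mu> \<and> var_lp_norm \<mu> q (\<lambda>y. ereal (f y)) < \<infinity> \<longrightarrow>
      var_lp_norm \<mu> q (\<lambda>y. enn2ereal (hl_maximal p n \<mu> f y)) \<le> ereal K * var_lp_norm \<mu> q (\<lambda>y. ereal (f y))"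
    and x: "x \<in> Qpn p n"
    and hyp: "var_lp_norm \<mu> q (\<lambda>y. if y \<in> qball p n \<gamma> x then
            ereal (b y) - ereal (ball_vol p n \<gamma> powr (- \<alpha> / real n)) *
              enn2ereal (frac_max_local p n \<mu> \<alpha> (qball p n \<gamma> x) b y)
          else 0)
       / var_lp_norm \<mu> q (\<lambda>y. ereal (indicator (qball p n \<gamma> x) y)) \<le> ereal C"
  shows "qp_ball_avg p n \<mu> (\<lambda>y. \<bar>b y - qp_ball_avg p n \<mu> b \<gamma> x\<bar>) \<gamma> x \<le> 4 * (max K 0 * C)"
proof -
  define B V where "B = qball p n \<gamma> x" and "V = ball_vol p n \<gamma>"
  have V: "0 < V" unfolding V_def using ball_vol_pos prime_gt_0_nat[OF p] by blast
  have space: "space \<mu> = Qpn p n" using haar unfolding is_qp_haar_def by simp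
  have B_meas: "B \<in> sets \<mu>" "emeasure \<mu> B = ennreal V"
    using haar x unfolding is_qp_haar_def B_def V_def ball_vol_def by auto
  have b_B: "integrable \<mu> (\<lambda>y. indicator B y * b y)"
    using b x unfolding qp_locally_integrable_def set_integrable_def B_def by auto
  define c where "c = (LINT y|\<mu>. \<bar>indicator B y * b y\<bar>) / V"
  define g where "g = (\<lambda>y. max 0 (c * indicator B y - indicator B y * b y))"
  have g: "integrable \<mu> g"
    and osc: "(LINT y|\<mu>. indicator B y * \<bar>b y - (1/V) * (LINT y|\<mu>. indicator B y * b y)\<bar>)
      \<le> 4 * (LINT y|\<mu>. g y)"
    using mean_oscillation_le_negative_part[OF B_meas V b_B] unfolding g_def c_def by auto
  define a where "a = (LINT y|\<mu>. g y) / V"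
  define F where "F = (\<lambda>y. if y \<in> B then ereal (b y) - ereal (V powr (- \<alpha> / real n)) *
      enn2ereal (frac_max_local p n \<mu> \<alpha> B b y) else 0)"
  have F: "var_lp_norm \<mu> q F / var_lp_norm \<mu> q (\<lambda>y. ereal (indicator B y)) \<le> ereal C"
    using hyp unfolding F_def B_def V_def .
  have g_F: "\<forall>y\<in>space \<mu>. \<bar>ereal (g y)\<bar> \<le> \<bar>F y\<bar>"
  proof
    fix y assume "y \<in> space \<mu>"
    show "\<bar>ereal (g y)\<bar> \<le> \<bar>F y\<bar>"
    proof (cases "y \<in> B")
      case True
      hence "ereal c \<le> ereal (V powr (- \<alpha> / real n)) * enn2ereal (frac_max_local p n \<mu> \<alpha> B b y)"
        using frac_max_local_ge_ball_average[OF p n x _ b_B[unfolded B_def]]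
        unfolding c_def B_def V_def by blast
      thus ?thesis using True abs_ereal_pos_part_le_abs_diff unfolding g_def F_def by simp
    qed (simp add: g_def F_def)
  qed
  have g_max: "\<forall>y\<in>space \<mu>. \<bar>ereal (a * indicator B y)\<bar> \<le> \<bar>enn2ereal (hl_maximal p n \<mu> g y)\<bar>"
  proof
    fix y assume "y \<in> space \<mu>"
    show "\<bar>ereal (a * indicator B y)\<bar> \<le> \<bar>enn2ereal (hl_maximal p n \<mu> g y)\<bar>"
    proof (cases "y \<in> B")
      case True
      have "indicator B z * g z = g z" "\<bar>g z\<bar> = g z" for z by (auto simp: g_def indicator_def)
      with hl_maximal_ge_ball_average[OF p n x, of y \<gamma> \<mu> g] g True
      have "ereal a \<le> enn2ereal (hl_maximal p n \<mu> g y)" unfolding a_def B_def V_def by simp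
      moreover have "0 \<le> a" unfolding a_def g_def using V by simp
      ultimately show ?thesis using True by (simp add: enn2ereal_nonneg)
    qed (simp add: enn2ereal_nonneg zero_ereal_def[symmetric])
  qed
  have "a \<le> max K 0 * C"
    by (rule le_of_maximal_inequality_on_indicator[OF B_meas V _ g_F F g_max])
      (use q maximal g in \<open>auto simp: space\<close>)
  have "qp_ball_avg p n \<mu> (\<lambda>y. \<bar>b y - qp_ball_avg p n \<mu> b \<gamma> x\<bar>) \<gamma> x
      = (1/V) * (LINT y|\<mu>. indicator B y * \<bar>b y - (1/V) * (LINT y|\<mu>. indicator B y * b y)\<bar>)"
    unfolding qp_ball_avg_def set_lebesgue_integral_def B_def V_def by simp
  also have "\<dots> \<le> 4 * a" using osc V unfolding a_def by (simp add: field_simps)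
  finally show ?thesis using \<open>a \<le> max K 0 * C\<close> by linarith
qed

theorem mainTheorem12:
  fixes p n :: nat and \<alpha> C :: real and \<mu> :: "qpn measure"
    and b q :: "qpn \<Rightarrow> real"
  assumes "prime p"
    and "0 < \<alpha>" and "\<alpha> < real n"
    and "is_qp_haar p n \<mu>"
    and "qp_locally_integrable p n \<mu> b"
    and "var_exp_B p n \<mu> q"
    and "C > 0"
    and "\<forall>\<gamma>::int. \<forall>x\<in>Qpn p n.
       var_lp_norm \<mu> q (\<lambda>y. if y \<in> qball p n \<gamma> x then
            ereal (b y) - ereal (ball_vol p n \<gamma> powr (- \<alpha> / real n)) *
              enn2ereal (frac_max_local p n \<mu> \<alpha> (qball p n \<gamma> x) b y)
          else 0)
       / var_lp_norm \<mu> q (\<lambda>y. ereal (indicator (qball p n \<gamma> x) y)) \<le> ereal C"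
  shows "qp_BMO p n \<mu> b"
proof -
  have n: "0 < n" using assms(2,3) by simp
  have q: "\<forall>y\<in>Qpn p n. 1 < q y"
    using assms(4,6) unfolding var_exp_B_def var_exp_P_def is_qp_haar_def by auto
  obtain K where K: "\<forall>f. f \<in> borel_measurable \<mu> \<and> var_lp_norm \<mu> q (\<lambda>y. ereal (f y)) < \<infinity> \<longrightarrow>
      var_lp_norm \<mu> q (\<lambda>y. enn2ereal (hl_maximal p n \<mu> f y)) \<le> ereal K * var_lp_norm \<mu> q (\<lambda>y. ereal (f y))"
    using assms(6) unfolding var_exp_B_def by blast
  have "\<forall>\<gamma>. \<forall>x\<in>Qpn p n.
      qp_ball_avg p n \<mu> (\<lambda>y. \<bar>b y - qp_ball_avg p n \<mu> b \<gamma> x\<bar>) \<gamma> x \<le> 4 * (max K 0 * C)"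
    using qball_mean_oscillation_le[OF assms(1) n assms(4,5) q K] assms(8) by blast
  thus ?thesis unfolding qp_BMO_def using assms(5) by blast
qed

end
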